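(* Let $X$ be a real Hilbert space, $C\subseteq X$ a closed convex set, $T:C\to C$ a nonexpansive map, $x_0\in C$, and let $p\in C$ be a fixed point of $T$. Let $N\in\mathbb{N}\setminus\{0\}$ satisfy $N\geq 2\|x_0-p\|$. Then for every $k\in\mathbb{N}$ and every monotone function $f:\mathbb{N}\to\mathbb{N}$ there exist $n\in\mathbb{N}$ with $n\leq f^{(r)}(0)$, where $r:=N^2(k+1)$, and $x\in C\cap B_N$ such that $$\|T(x)-x\|\leq \frac{1}{f(n)+1}$$ and $$\forall y\in C\cap B_N\ \left(\|T(y)-y\|\leq \frac{1}{n+1}\ \to\ \|x-x_0\|^2\leq \|y-x_0\|^2+\frac{1}{k+1}\right).$$
   Context: $B_N:=\{x\in X:\ \|x-p\|\leq N\}$ denotes the closed ball of radius $N$ centered at the fixed point $p$. A function $f:\mathbb{N}\to\mathbb{N}$ is called monotone if $f(n)\leq f(n+1)$ for all $n\in\mathbb{N}$. $f^{(r)}$ denotes the $r$-fold composition of $f$ with itself ($f^{(0)}$ is the identity). A map $T$ is nonexpansive if $\|T(x)-T(y)\|\leq\|x-y\|$ for all $x,y$. *)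

theory Defs
  imports "HOL-Analysis.Analysis"
begin

end

theory Submission
  imports Defs
begin

text \<open>A finite descent. Every level \<open>S m\<close> of \<open>1/(m+1)\<close>-approximate fixed points in
  \<open>C \<inter> B\<^sub>N\<close> contains \<open>p\<close>, whose squared distance to \<open>x\<^sub>0\<close> is at most \<open>N\<^sup>2/4\<close>. If metastability
  failed at every level \<open>n = (f ^^ i) 0\<close>, \<open>i < N\<^sup>2(k+1)\<close>, each failure would turn a point of level
  \<open>f(n)\<close> into a point of level \<open>n\<close> with squared distance smaller by more than \<open>1/(k+1)\<close>;
  starting from \<open>p\<close>, after \<open>N\<^sup>2(k+1)\<close> steps the squared distance would be negative.\<close>

lemma descent_bound:
  fixes S :: "nat \<Rightarrow> 'a set" and d :: "'a \<Rightarrow> real"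
  assumes top: "p \<in> S r"
    and descends: "\<And>i x. i < r \<Longrightarrow> x \<in> S (Suc i) \<Longrightarrow> \<exists>y \<in> S i. d y + \<epsilon> < d x"
  shows "\<exists>x \<in> S 0. d x + real r * \<epsilon> \<le> d p"
proof -
  have "\<exists>x \<in> S i. d x + real (r - i) * \<epsilon> \<le> d p" if "i \<le> r" for i
    using that
  proof (induction i rule: inc_induct)
    case base
    show ?case using top by auto
  next
    case (step i)
    then obtain x where x: "x \<in> S (Suc i)" "d x + real (r - Suc i) * \<epsilon> \<le> d p"
      by blast
    obtain y where y: "y \<in> S i" "d y + \<epsilon> < d x"
      using descends[OF \<open>i < r\<close> x(1)] by blast
    have "real (r - i) = real (r - Suc i) + 1"
      using \<open>i < r\<close> by linarith
    then have "d y + real (r - i) * \<epsilon> \<le> d p"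
      using x(2) y(2) by (simp add: algebra_simps)
    with y(1) show ?case by blast
  qed
  then show ?thesis by fastforce
qed

lemma metastable_quasi_minimizer:
  fixes f :: "nat \<Rightarrow> nat" and S :: "nat \<Rightarrow> 'a set" and d :: "'a \<Rightarrow> real"
  assumes "mono f"
    and p_mem: "\<And>m. p \<in> S m"
    and d_nonneg: "\<And>m x. x \<in> S m \<Longrightarrow> 0 \<le> d x"
    and d_p: "d p < real r * \<epsilon>"
  shows "\<exists>n \<le> (f ^^ r) 0. \<exists>x \<in> S (f n). \<forall>y \<in> S n. d x \<le> d y + \<epsilon>"
proof (rule ccontr)
  assume fails: "\<not> ?thesis"
  let ?level = "\<lambda>i. S ((f ^^ i) 0)"
  have "\<exists>y \<in> ?level i. d y + \<epsilon> < d x" if "i < r" "x \<in> ?level (Suc i)" for i x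
  proof -
    have "(f ^^ i) 0 \<le> (f ^^ r) 0"
      using funpow_decreasing[OF less_imp_le[OF \<open>i < r\<close>] \<open>mono f\<close>] by (simp add: bot_nat_def)
    then have "\<not> (\<forall>y \<in> ?level i. d x \<le> d y + \<epsilon>)"
      using fails that(2) by auto
    then show ?thesis by (auto simp: not_le)
  qed
  from descent_bound[of p ?level, OF p_mem this] obtain x
    where "x \<in> ?level 0" "d x + real r * \<epsilon> \<le> d p"
    by blast
  with d_nonneg d_p show False by fastforce
qed

theorem mainTheorem1:
  fixes C :: "'a::{real_inner, complete_space} set"
    and T :: "'a \<Rightarrow> 'a"
    and x0 p :: 'a
    and N :: nat
  assumes "closed C" and "convex C"
    and "T ` C \<subseteq> C"
    and "\<forall>x\<in>C. \<forall>y\<in>C. norm (T x - T y) \<le> norm (x - y)"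
    and "x0 \<in> C" and "p \<in> C" and "T p = p"
    and "N > 0" and "real N \<ge> 2 * norm (x0 - p)"
  shows "\<forall>(k::nat) (f::nat \<Rightarrow> nat). mono f \<longrightarrow>
    (\<exists>n x. n \<le> (f ^^ (N\<^sup>2 * (k + 1))) 0 \<and> x \<in> C \<and> x \<in> cball p (real N) \<and>
      norm (T x - x) \<le> 1 / (real (f n) + 1) \<and>
      (\<forall>y \<in> C \<inter> cball p (real N). norm (T y - y) \<le> 1 / (real n + 1) \<longrightarrow>
          (norm (x - x0))\<^sup>2 \<le> (norm (y - x0))\<^sup>2 + 1 / (real k + 1)))"
proof (intro allI impI)
  fix k :: nat and f :: "nat \<Rightarrow> nat"
  assume "mono f"
  define S where "S m = {x \<in> C \<inter> cball p (real N). norm (T x - x) \<le> 1 / (real m + 1)}" for m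
  have "(norm (p - x0))\<^sup>2 \<le> (real N / 2)\<^sup>2"
    using assms(9) by (intro power_mono) (auto simp: norm_minus_commute)
  also have "\<dots> < (real N)\<^sup>2"
    using \<open>N > 0\<close> by (simp add: power_divide)
  also have "\<dots> = real (N\<^sup>2 * (k + 1)) * (1 / (real k + 1))"
    by (simp add: field_simps)
  finally have "\<exists>n \<le> (f ^^ (N\<^sup>2 * (k + 1))) 0. \<exists>x \<in> S (f n).
      \<forall>y \<in> S n. (norm (x - x0))\<^sup>2 \<le> (norm (y - x0))\<^sup>2 + 1 / (real k + 1)"
    using assms(6,7) by (intro metastable_quasi_minimizer[OF \<open>mono f\<close>]) (auto simp: S_def)
  then show "\<exists>n x. n \<le> (f ^^ (N\<^sup>2 * (k + 1))) 0 \<and> x \<in> C \<and> x \<in> cball p (real N) \<and>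
      norm (T x - x) \<le> 1 / (real (f n) + 1) \<and>
      (\<forall>y \<in> C \<inter> cball p (real N). norm (T y - y) \<le> 1 / (real n + 1) \<longrightarrow>
          (norm (x - x0))\<^sup>2 \<le> (norm (y - x0))\<^sup>2 + 1 / (real k + 1))"
    unfolding S_def by blast
qed

end
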